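(* Let $N\ge 1$ be an integer and $h,g>0$ real numbers. For $k\in\{0,1,\dots,N\}$ and $\Delta>0$ define $$R_k(\Delta):=\log\Big(1+(N-k)\frac{h^2}{1+\Delta}\Big)+\log(1+kg^2)-k\log\Big(\frac{1+\Delta}{\Delta}\Big)$$ (logarithms base $2$), and let $\Delta^*_{0N}$ be the positive root of $R_0(\Delta)=R_N(\Delta)$. Then $\Delta^*_{0N}$ attains $\max_{\Delta>0}\min_{k\in\{0,\dots,N\}}R_k(\Delta)$, and this optimal value equals $R_0(\Delta^*_{0N})$.
   Context: This is the optimal common quantization distortion for quantize-map-and-forward in the symmetric $N$-relay diamond network (all source-relay channel magnitudes equal $h$, all relay-destination magnitudes equal $g$); $R_k(\Delta)$ is the rate of a cut containing $k$ relays when every relay uses Gaussian quantization distortion $\Delta$, and the equation $R_0(\Delta)=R_N(\Delta)$ has exactly one positive root. *)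

theory Defs
  imports Complex_Main
begin

text \<open>Cut rate with k relays on the destination side, common distortion D (logs base 2).\<close>
definition qmf_R :: "nat \<Rightarrow> real \<Rightarrow> real \<Rightarrow> nat \<Rightarrow> real \<Rightarrow> real" where
  "qmf_R N h g k D =
     log 2 (1 + real (N - k) * h\<^sup>2 / (1 + D)) + log 2 (1 + real k * g\<^sup>2)
     - real k * log 2 ((1 + D) / D)"

definition qmf_minR :: "nat \<Rightarrow> real \<Rightarrow> real \<Rightarrow> real \<Rightarrow> real" where
  "qmf_minR N h g D = Min ((\<lambda>k. qmf_R N h g k D) ` {0..N})"

end

theory Submission
  imports Defs "HOL-Analysis.Analysis"
begin

text \<open>For fixed \<open>D\<close> the cut rate \<open>R\<^sub>k(D)\<close> is concave in \<open>k\<close>, so every \<open>R\<^sub>k\<close> lies above the chord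
  through \<open>R\<^sub>0\<close> and \<open>R\<^sub>N\<close>; at a crossing point \<open>R\<^sub>0 = R\<^sub>N\<close> the minimum over all cuts is therefore
  \<open>R\<^sub>0\<close>. Moreover \<open>R\<^sub>0\<close> decreases and \<open>R\<^sub>N\<close> increases in \<open>D\<close>, so moving \<open>D\<close> away from the
  crossing lowers one of these two cuts below the common value.\<close>

lemma log_one_plus_scaled_ge:
  fixes b x t :: real
  assumes "b > 1" "x \<ge> 0" "0 \<le> t" "t \<le> 1"
  shows "t * log b (1 + x) \<le> log b (1 + t * x)"
proof -
  have "(1 - t) * ln 1 + t * ln (1 + x) \<le> ln ((1 - t) *\<^sub>R 1 + t *\<^sub>R (1 + x))"
    using ln_concave[unfolded concave_on_iff] assms
    by (metis add_pos_nonneg diff_add_cancel diff_ge_0_iff_ge greaterThan_iff zero_less_one)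
  moreover have "1 - t + t * (1 + x) = 1 + t * x"
    by algebra
  ultimately have "t * ln (1 + x) \<le> ln (1 + t * x)"
    by (metis add_0 mult_zero_right ln_one real_scaleR_def mult_1_right)
  then show ?thesis
    using assms(1) unfolding log_def by (simp add: divide_right_mono)
qed

lemma qmf_R_ge_chord:
  fixes N k :: nat and h g D :: real
  assumes "N \<ge> 1" "k \<le> N" "D > 0"
  shows "qmf_R N h g k D \<ge> (1 - real k / real N) * qmf_R N h g 0 D
                           + (real k / real N) * qmf_R N h g N D"
proof -
  define t where "t = real k / real N"
  define c where "c = real N * h\<^sup>2 / (1 + D)"
  define G where "G = real N * g\<^sup>2"
  define L where "L = log 2 ((1 + D) / D)"
  have t: "0 \<le> t" "t \<le> 1"
    using assms by (auto simp: t_def divide_le_eq_1)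
  have "c \<ge> 0" "G \<ge> 0"
    using assms by (simp_all add: c_def G_def)
  have k: "real k = t * real N" and Nk: "real (N - k) = (1 - t) * real N"
    using assms by (simp_all add: t_def of_nat_diff field_simps)
  have R0: "qmf_R N h g 0 D = log 2 (1 + c)"
    and RN: "qmf_R N h g N D = log 2 (1 + G) - real N * L"
    by (simp_all add: qmf_R_def c_def G_def L_def)
  have Rk: "qmf_R N h g k D = log 2 (1 + (1 - t) * c) + log 2 (1 + t * G) - t * (real N * L)"
    unfolding qmf_R_def Nk k by (simp add: c_def G_def L_def mult.assoc)
  have "(1 - t) * log 2 (1 + c) \<le> log 2 (1 + (1 - t) * c)"
    using log_one_plus_scaled_ge[of 2 c "1 - t"] \<open>c \<ge> 0\<close> t by simp
  moreover have "t * log 2 (1 + G) \<le> log 2 (1 + t * G)"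
    using log_one_plus_scaled_ge[of 2 G t] \<open>G \<ge> 0\<close> t by simp
  ultimately show ?thesis
    unfolding R0 RN Rk t_def[symmetric] by (simp add: algebra_simps)
qed

lemma qmf_R_0_antimono:
  fixes N :: nat and h g D D' :: real
  assumes "0 < D" "D \<le> D'"
  shows "qmf_R N h g 0 D' \<le> qmf_R N h g 0 D"
proof -
  have "real N * h\<^sup>2 / (1 + D') \<le> real N * h\<^sup>2 / (1 + D)"
    using assms by (intro divide_left_mono) auto
  moreover have "0 < 1 + real N * h\<^sup>2 / (1 + D')"
    using assms by (simp add: add_pos_nonneg)
  ultimately show ?thesis
    by (simp add: qmf_R_def)
qed

lemma qmf_R_N_mono:
  fixes N :: nat and h g D D' :: real
  assumes "0 < D" "D \<le> D'"
  shows "qmf_R N h g N D \<le> qmf_R N h g N D'"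
proof -
  have "(1 + D') / D' \<le> (1 + D) / D"
    using assms by (simp add: field_simps)
  then have "log 2 ((1 + D') / D') \<le> log 2 ((1 + D) / D)"
    using assms by simp
  then show ?thesis
    by (simp add: qmf_R_def mult_left_mono)
qed

lemma qmf_minR_le:
  fixes N k :: nat and h g D :: real
  assumes "k \<le> N"
  shows "qmf_minR N h g D \<le> qmf_R N h g k D"
  unfolding qmf_minR_def using assms by (intro Min_le) auto

lemma qmf_minR_at_crossing:
  fixes N :: nat and h g D :: real
  assumes "N \<ge> 1" "D > 0" "qmf_R N h g 0 D = qmf_R N h g N D"
  shows "qmf_minR N h g D = qmf_R N h g 0 D"
proof -
  have "qmf_R N h g 0 D \<le> qmf_R N h g k D" if "k \<le> N" for k
  proof -
    have "(1 - real k / real N) * qmf_R N h g 0 D + (real k / real N) * qmf_R N h g N D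
          \<le> qmf_R N h g k D"
      using qmf_R_ge_chord[OF assms(1) that assms(2)] .
    then show ?thesis
      using assms(3) by (simp add: algebra_simps)
  qed
  then show ?thesis
    unfolding qmf_minR_def by (intro Min_eqI) auto
qed

theorem theorem2:
  fixes N :: nat and h g Ds :: real
  assumes "N \<ge> 1" and "h > 0" and "g > 0"
    and "Ds > 0" and "qmf_R N h g 0 Ds = qmf_R N h g N Ds"
  shows "(\<forall>D>0. qmf_minR N h g D \<le> qmf_minR N h g Ds)
         \<and> qmf_minR N h g Ds = qmf_R N h g 0 Ds"
proof -
  have opt: "qmf_minR N h g Ds = qmf_R N h g 0 Ds"
    using qmf_minR_at_crossing assms(1,4,5) .
  have "qmf_minR N h g D \<le> qmf_minR N h g Ds" if "D > 0" for D
  proof (cases "D \<le> Ds")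
    case True
    then show ?thesis
      using qmf_minR_le[of N N h g D] qmf_R_N_mono[OF that True, of N h g] opt assms(5) by fastforce
  next
    case False
    then show ?thesis
      using qmf_minR_le[of 0 N h g D] qmf_R_0_antimono[OF assms(4), of D N h g] opt by fastforce
  qed
  with opt show ?thesis
    by blast
qed

end
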